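(* Suppose $m=2n$ and $\tilde B=\begin{bmatrix}B\\ I_n\end{bmatrix}$. Then for each vertex $t\in\mathbb T_n$ and each $1\le i\le n$, $\tilde{\mathbf g}_{i;t}=\begin{bmatrix}\mathbf g_{i;t}\\ 0\end{bmatrix}$.
   Context: $[b]_+=\max(b,0)$. $\mathbb T_n$ is the $n$-regular tree with edges labeled $1,\dots,n$, distinct labels at each vertex; $t\overset{k}{-}t'$ denotes an edge labeled $k$; $t_0$ a root. Fix positive integers $r_1,\dots,r_n$ and a skew-symmetrizable integer $n\times n$ matrix $B$; $\tilde B=(b_{ij})$ is the given $m\times n$ matrix. Matrices $\tilde B_t=(b_{ij;t})$: $\tilde B_{t_0}=\tilde B$ and for $t\overset{k}{-}t'$, $b_{ij;t'}=-b_{ij;t}$ if $i=k$ or $j=k$, else $b_{ij;t}+r_k([-\varepsilon b_{ik;t}]_+b_{kj;t}+b_{ik;t}[\varepsilon b_{kj;t}]_+)$ (for $i\le m$, $j\le n$; $\varepsilon\in\{\pm1\}$, results independent of $\varepsilon$). $C_t=(c_{ij;t})$, $n\times n$: $C_{t_0}=I_n$, $c_{ij;t'}=-c_{ij;t}$ if $j=k$, else $c_{ij;t}+r_k(c_{ik;t}[\varepsilon b_{kj;t}]_++[-\varepsilon c_{ik;t}]_+b_{kj;t})$; each column of $C_t$ is sign-coherent (nonzero, entries all $\geq0$ or all $\le0$). $G_t$, $n\times n$ with columns $\mathbf g_{i;t}$: $G_{t_0}=I_n$, $\mathbf g_{i;t'}=\mathbf g_{i;t}$ ($i\neq k$), $\mathbf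 g_{k;t'}=-\mathbf g_{k;t}+r_k(\sum_{j=1}^n[-\varepsilon b_{jk;t}]_+\mathbf g_{j;t}-\sum_{j=1}^n[-\varepsilon c_{jk;t}]_+\mathbf b_j)$, $\mathbf b_j$ the $j$-th column of $B$. $\tilde G_t$, $m\times m$ with columns $\tilde{\mathbf g}_{i;t}$: $\tilde G_{t_0}=I_m$, $\tilde{\mathbf g}_{i;t'}=\tilde{\mathbf g}_{i;t}$ ($i\ne k$), $\tilde{\mathbf g}_{k;t'}=-\tilde{\mathbf g}_{k;t}+r_k(\sum_{j=1}^m[-\varepsilon b_{jk;t}]_+\tilde{\mathbf g}_{j;t}-\sum_{j=1}^n[-\varepsilon c_{jk;t}]_+\tilde{\mathbf b}_{j})$, $\tilde{\mathbf b}_j$ the $j$-th column of $\tilde B$. ($\tilde{\mathbf g}_{i;t}$ is the $g$-vector of a quantum cluster variable of a generalized quantum cluster algebra with principal coefficients.) *)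

theory Defs
  imports Main
begin

text \<open>Matrices are functions nat \<Rightarrow> nat \<Rightarrow> int, indexed from 1 (row, column).
  A vertex t of the n-regular tree is encoded by the (reduced) sequence of
  mutation directions on the unique path from the root t0 to t; each step also
  carries the sign epsilon used in the mutation formulas at that step.\<close>

definition pos :: "int \<Rightarrow> int" where "pos x = max x 0"

definition idm :: "nat \<Rightarrow> nat \<Rightarrow> int" where
  "idm i j = (if i = j then 1 else 0)"

definition skew_symmetrizable :: "nat \<Rightarrow> (nat \<Rightarrow> nat \<Rightarrow> int) \<Rightarrow> bool" where
  "skew_symmetrizable n B \<longleftrightarrow> (\<exists>d :: nat \<Rightarrow> int. (\<forall>i\<in>{1..n}. d i > 0) \<and>
     (\<forall>i\<in>{1..n}. \<forall>j\<in>{1..n}. d i * B i j = - (d j * B j i)))"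

definition mutB :: "(nat \<Rightarrow> int) \<Rightarrow> nat \<Rightarrow> int \<Rightarrow> (nat \<Rightarrow> nat \<Rightarrow> int) \<Rightarrow> nat \<Rightarrow> nat \<Rightarrow> int" where
  "mutB r k e Bt = (\<lambda>i j. if i = k \<or> j = k then - Bt i j
      else Bt i j + r k * (pos (- e * Bt i k) * Bt k j + Bt i k * pos (e * Bt k j)))"

definition mutC :: "(nat \<Rightarrow> int) \<Rightarrow> nat \<Rightarrow> int \<Rightarrow> (nat \<Rightarrow> nat \<Rightarrow> int) \<Rightarrow> (nat \<Rightarrow> nat \<Rightarrow> int)
    \<Rightarrow> nat \<Rightarrow> nat \<Rightarrow> int" where
  "mutC r k e Bt Ct = (\<lambda>i j. if j = k then - Ct i j
      else Ct i j + r k * (Ct i k * pos (e * Bt k j) + pos (- e * Ct i k) * Bt k j))"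

text \<open>Mutation of a G-matrix whose columns are vectors with p components, the
  sum over "b-coefficients" ranges over j = 1..p, and B0 is the fixed initial
  matrix whose columns b_j (j = 1..n) appear in the formula.
  For G_t take p = n and B0 = B; for G~_t take p = m and B0 = B~.\<close>
definition mutG :: "nat \<Rightarrow> nat \<Rightarrow> (nat \<Rightarrow> int) \<Rightarrow> (nat \<Rightarrow> nat \<Rightarrow> int) \<Rightarrow> nat \<Rightarrow> int
    \<Rightarrow> (nat \<Rightarrow> nat \<Rightarrow> int) \<Rightarrow> (nat \<Rightarrow> nat \<Rightarrow> int) \<Rightarrow> (nat \<Rightarrow> nat \<Rightarrow> int) \<Rightarrow> nat \<Rightarrow> nat \<Rightarrow> int" where
  "mutG n p r B0 k e Bt Ct G = (\<lambda>i l. if l \<noteq> k then G i l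
      else - G i k + r k * ((\<Sum>j = 1..p. pos (- e * Bt j k) * G i j)
                            - (\<Sum>j = 1..n. pos (- e * Ct j k) * B0 i j)))"

type_synonym seed = "(nat \<Rightarrow> nat \<Rightarrow> int) \<times> (nat \<Rightarrow> nat \<Rightarrow> int) \<times> (nat \<Rightarrow> nat \<Rightarrow> int) \<times> (nat \<Rightarrow> nat \<Rightarrow> int)"

text \<open>One step t -k- t' acting on (B~_t, C_t, G_t, G~_t).\<close>
definition mut_step :: "nat \<Rightarrow> nat \<Rightarrow> (nat \<Rightarrow> int) \<Rightarrow> (nat \<Rightarrow> nat \<Rightarrow> int) \<Rightarrow> (nat \<Rightarrow> nat \<Rightarrow> int)
    \<Rightarrow> seed \<Rightarrow> nat \<times> int \<Rightarrow> seed" where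
  "mut_step n m r B Btil S ke = (case S of (Bt, Ct, G, Gt) \<Rightarrow> case ke of (k, e) \<Rightarrow>
     (mutB r k e Bt, mutC r k e Bt Ct, mutG n n r B k e Bt Ct G, mutG n m r Btil k e Bt Ct Gt))"

definition seed_at :: "nat \<Rightarrow> nat \<Rightarrow> (nat \<Rightarrow> int) \<Rightarrow> (nat \<Rightarrow> nat \<Rightarrow> int) \<Rightarrow> (nat \<Rightarrow> nat \<Rightarrow> int)
    \<Rightarrow> (nat \<times> int) list \<Rightarrow> seed" where
  "seed_at n m r B Btil ps = foldl (mut_step n m r B Btil) (Btil, idm, idm, idm) ps"

text \<open>Paths from the root in T_n: labels in 1..n, no immediate backtracking
  (so they correspond bijectively to vertices), signs in {1,-1}.\<close>
definition tree_path :: "nat \<Rightarrow> (nat \<times> int) list \<Rightarrow> bool" where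
  "tree_path n ps \<longleftrightarrow> (\<forall>(k, e) \<in> set ps. k \<in> {1..n} \<and> (e = 1 \<or> e = -1)) \<and>
     (\<forall>i. Suc i < length ps \<longrightarrow> fst (ps ! i) \<noteq> fst (ps ! Suc i))"

end

theory Submission
  imports Defs
begin

text \<open>With principal coefficients the bottom
  rows of \<open>B~_t\<close> are the rows of \<open>C_t\<close>, and the columns of \<open>G~_t\<close> with index
  beyond n are never mutated, so they stay unit vectors. In the mutation of the
  k-th extended g-vector, row \<open>n + i\<close> then receives
  \<open>[-\<epsilon> b_(n+i)k]_+ - [-\<epsilon> c_ik]_+ = 0\<close>, while rows 1..n reproduce the mutation of
  \<open>g_k\<close>.\<close>

lemma sum_mult_idm:
  assumes "finite A" "l \<in> A"
  shows "(\<Sum>j\<in>A. f j * idm l j) = f l"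
proof -
  have "(\<Sum>j\<in>A. f j * idm l j) = (\<Sum>j\<in>A. if l = j then f j else 0)"
    by (rule sum.cong) (auto simp: idm_def)
  then show ?thesis using assms by simp
qed

lemma mutB_eq_mutC:
  assumes "i' \<noteq> k" "Bt i' j = Ct i j" "Bt i' k = Ct i k"
  shows "mutB r k e Bt i' j = mutC r k e Bt Ct i j"
  using assms by (simp add: mutB_def mutC_def algebra_simps)

lemma mutG_other_column: "l \<noteq> k \<Longrightarrow> mutG n p r B0 k e Bt Ct G i l = G i l"
  by (simp add: mutG_def)

definition principal_seed :: "nat \<Rightarrow> nat \<Rightarrow> seed \<Rightarrow> bool" where
  "principal_seed n m S = (case S of (Bt, Ct, G, Gt) \<Rightarrow>
     (\<forall>i\<in>{1..n}. \<forall>j\<in>{1..n}. Bt (n + i) j = Ct i j) \<and>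
     (\<forall>l j. n < j \<longrightarrow> Gt l j = idm l j) \<and>
     (\<forall>j\<in>{1..n}. \<forall>l\<in>{1..m}. Gt l j = (if l \<le> n then G l j else 0)))"

lemma sum_principal_G:
  assumes m: "m = 2 * n" and l: "l \<in> {1..m}"
    and frozen: "\<And>j. n < j \<Longrightarrow> Gt l j = idm l j"
    and padded: "\<And>j. j \<in> {1..n} \<Longrightarrow> Gt l j = (if l \<le> n then G l j else 0)"
  shows "(\<Sum>j = 1..m. w j * Gt l j) = (if l \<le> n then (\<Sum>j = 1..n. w j * G l j) else w l)"
proof -
  have "(\<Sum>j = 1..m. w j * Gt l j)
      = (\<Sum>j = 1..n. w j * Gt l j) + (\<Sum>j = n + 1..n + n. w j * Gt l j)"
    unfolding m mult_2 by (rule sum.ub_add_nat) simp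
  also have "(\<Sum>j = n + 1..n + n. w j * Gt l j) = (\<Sum>j = n + 1..n + n. w j * idm l j)"
    by (rule sum.cong) (auto simp: frozen)
  also have "\<dots> = (if l \<le> n then 0 else w l)"
  proof (cases "l \<le> n")
    case True
    then show ?thesis by (auto simp: idm_def intro: sum.neutral)
  next
    case False
    then show ?thesis using l m by (simp add: sum_mult_idm)
  qed
  also have "(\<Sum>j = 1..n. w j * Gt l j) = (if l \<le> n then (\<Sum>j = 1..n. w j * G l j) else 0)"
    by (simp add: padded)
  finally show ?thesis by simp
qed

lemma sum_principal_Btil:
  assumes m: "m = 2 * n" and l: "l \<in> {1..m}"
    and Btil: "\<forall>i\<in>{1..m}. \<forall>j\<in>{1..n}. Btil i j = (if i \<le> n then B i j else idm (i - n) j)"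
  shows "(\<Sum>j = 1..n. w j * Btil l j) = (if l \<le> n then (\<Sum>j = 1..n. w j * B l j) else w (l - n))"
proof -
  have "(\<Sum>j = 1..n. w j * Btil l j)
      = (\<Sum>j = 1..n. w j * (if l \<le> n then B l j else idm (l - n) j))"
    using l Btil by (intro sum.cong) auto
  also have "\<dots> = (if l \<le> n then (\<Sum>j = 1..n. w j * B l j) else w (l - n))"
  proof (cases "l \<le> n")
    case False
    then have "l - n \<in> {1..n}" using l m by auto
    then show ?thesis using False by (simp add: sum_mult_idm)
  qed simp
  finally show ?thesis .
qed

lemma mutG_principal_column:
  assumes m: "m = 2 * n" and k: "k \<in> {1..n}" and l: "l \<in> {1..m}"
    and Btil: "\<forall>i\<in>{1..m}. \<forall>j\<in>{1..n}. Btil i j = (if i \<le> n then B i j else idm (i - n) j)"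
    and S: "principal_seed n m (Bt, Ct, G, Gt)"
  shows "mutG n m r Btil k e Bt Ct Gt l k = (if l \<le> n then mutG n n r B k e Bt Ct G l k else 0)"
proof -
  from S have coeff_rows: "\<And>i. i \<in> {1..n} \<Longrightarrow> Bt (n + i) k = Ct i k"
    and frozen: "\<And>j. n < j \<Longrightarrow> Gt l j = idm l j"
    and padded: "\<And>j. j \<in> {1..n} \<Longrightarrow> Gt l j = (if l \<le> n then G l j else 0)"
    using k l by (auto simp: principal_seed_def)
  show ?thesis
  proof (cases "l \<le> n")
    case True
    then show ?thesis
      using sum_principal_G[where Gt = Gt and G = G, OF m l frozen padded] sum_principal_Btil[OF m l Btil] padded[OF k]
      by (simp add: mutG_def)
  next
    case False
    then have "l - n \<in> {1..n}" using l m by auto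
    then have "Bt (n + (l - n)) k = Ct (l - n) k" by (rule coeff_rows)
    then have "Bt l k = Ct (l - n) k" using False by simp
    then show ?thesis
      using False sum_principal_G[where Gt = Gt and G = G, OF m l frozen padded] sum_principal_Btil[OF m l Btil] padded[OF k]
      by (simp add: mutG_def)
  qed
qed

lemma principal_seed_mut_step:
  assumes m: "m = 2 * n" and k: "k \<in> {1..n}"
    and Btil: "\<forall>i\<in>{1..m}. \<forall>j\<in>{1..n}. Btil i j = (if i \<le> n then B i j else idm (i - n) j)"
    and S: "principal_seed n m (Bt, Ct, G, Gt)"
  shows "principal_seed n m (mut_step n m r B Btil (Bt, Ct, G, Gt) (k, e))"
proof -
  from S have coeff_rows: "\<And>i j. i \<in> {1..n} \<Longrightarrow> j \<in> {1..n} \<Longrightarrow> Bt (n + i) j = Ct i j"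
    and frozen: "\<And>l j. n < j \<Longrightarrow> Gt l j = idm l j"
    and padded: "\<And>j l. j \<in> {1..n} \<Longrightarrow> l \<in> {1..m} \<Longrightarrow> Gt l j = (if l \<le> n then G l j else 0)"
    by (auto simp: principal_seed_def)
  have "mutB r k e Bt (n + i) j = mutC r k e Bt Ct i j" if "i \<in> {1..n}" "j \<in> {1..n}" for i j
    using that k by (intro mutB_eq_mutC coeff_rows) auto
  moreover have "mutG n m r Btil k e Bt Ct Gt l j = idm l j" if "n < j" for l j
    using that k frozen by (simp add: mutG_other_column)
  moreover have "mutG n m r Btil k e Bt Ct Gt l j
      = (if l \<le> n then mutG n n r B k e Bt Ct G l j else 0)"
    if "j \<in> {1..n}" "l \<in> {1..m}" for j l
  proof (cases "j = k")
    case True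
    then show ?thesis using mutG_principal_column[OF m k that(2) Btil S] by simp
  next
    case False
    then show ?thesis using padded[OF that] by (simp add: mutG_other_column)
  qed
  ultimately show ?thesis by (simp add: mut_step_def principal_seed_def)
qed

lemma principal_seed_seed_at:
  assumes m: "m = 2 * n"
    and Btil: "\<forall>i\<in>{1..m}. \<forall>j\<in>{1..n}. Btil i j = (if i \<le> n then B i j else idm (i - n) j)"
    and labels: "\<forall>(k, e) \<in> set ps. k \<in> {1..n}"
  shows "principal_seed n m (seed_at n m r B Btil ps)"
  using labels
proof (induction ps rule: rev_induct)
  case Nil
  have "Btil (n + i) j = idm i j" if "i \<in> {1..n}" "j \<in> {1..n}" for i j
    using that m Btil by auto
  then show ?case
    by (auto simp: seed_at_def principal_seed_def idm_def)
next
  case (snoc x ps)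
  obtain k e where x: "x = (k, e)" by (cases x)
  obtain Bt Ct G Gt where S: "seed_at n m r B Btil ps = (Bt, Ct, G, Gt)"
    by (cases "seed_at n m r B Btil ps") auto
  have "principal_seed n m (Bt, Ct, G, Gt)" using snoc S by auto
  moreover have "k \<in> {1..n}" using snoc.prems x by auto
  ultimately show ?case
    using principal_seed_mut_step[OF m _ Btil] S x by (simp add: seed_at_def)
qed

theorem lemmal:
  fixes n m :: nat and r :: "nat \<Rightarrow> int" and B Btil :: "nat \<Rightarrow> nat \<Rightarrow> int"
    and ps :: "(nat \<times> int) list"
  assumes "n \<ge> 1"
    and "\<forall>k\<in>{1..n}. r k > 0"
    and "skew_symmetrizable n B"
    and "m = 2 * n"
    and "\<forall>i\<in>{1..m}. \<forall>j\<in>{1..n}. Btil i j = (if i \<le> n then B i j else idm (i - n) j)"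
    and "tree_path n ps"
  shows "\<forall>i\<in>{1..n}. \<forall>l\<in>{1..m}.
           (case seed_at n m r B Btil ps of (Bt, Ct, G, Gt) \<Rightarrow>
              Gt l i = (if l \<le> n then G l i else 0))"
proof -
  have "\<forall>(k, e) \<in> set ps. k \<in> {1..n}" using assms(6) by (auto simp: tree_path_def)
  then have "principal_seed n m (seed_at n m r B Btil ps)"
    using principal_seed_seed_at[OF assms(4) assms(5)] by blast
  then show ?thesis by (auto simp: principal_seed_def split: prod.splits)
qed

end
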